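(* Suppose that $X(\mathbb{R}^n)$ is a translation-invariant Banach function space. If $w(x):=e^{c|x|}$ for $x\in\mathbb{R}^n$ with a constant $c>0$, then the weighted Banach function space $X(\mathbb{R}^n,w)$ does not satisfy the weak doubling property.
   Context: Banach function spaces: let $\mathfrak{M}^+(\mathbb{R}^n)$ be the set of measurable functions with values in $[0,\infty]$. A Banach function norm $\rho:\mathfrak{M}^+\to[0,\infty]$ satisfies, for all $f,g,f_j\in\mathfrak{M}^+$, $a\ge0$, measurable $E$: (A1) $\rho(f)=0\iff f=0$ a.e., $\rho(af)=a\rho(f)$, $\rho(f+g)\le\rho(f)+\rho(g)$; (A2) $0\le g\le f$ a.e. implies $\rho(g)\le\rho(f)$; (A3) $0\le f_j\uparrow f$ a.e. implies $\rho(f_j)\uparrow\rho(f)$; (A4) $|E|<\infty$ implies $\rho(\chi_E)<\infty$; (A5) $|E|<\infty$ implies $\int_Ef\le C_E\rho(f)$ with $C_E$ independent of $f$. $X(\mathbb{R}^n)$ is the set of measurable complex $f$ with $\rho(|f|)<\infty$, $\|f\|_X=\rho(|f|)$. $X$ is translation-invariant if $\|u(\cdot-y)\|_X=\|u\|_X$ for all $y\in\mathbb{R}^n$, $u\in X$. For a weight $w$, $X(\mathbb{R}^n,w)=\{f: fw\in X\}$ with $\|f\|_{X(\mathbb{R}^n,w)}=\|fw\|_X$. Weak doubling property: a Banach function space $Z(\mathbb{R}^n)$ has it if there is $\tau>1$ with $\liminf_{R\to\infty}\big(\inf_{y\in\mathbb{R}^n}\|\chi_{B(y,\tau R)}\|_{Z}/\|\chi_{B(y,R)}\|_{Z}\big)<\infty$,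 where $B(y,R)$ is the open ball of radius $R$ centered at $y$. *)

theory Defs
  imports "HOL-Analysis.Analysis"
begin

text \<open>A Banach function norm on nonnegative (extended) measurable functions on a
Euclidean space 'a (playing the role of R^n), axioms (A1)-(A5) w.r.t. Lebesgue measure.\<close>

definition banach_function_norm :: "(('a::euclidean_space \<Rightarrow> ennreal) \<Rightarrow> ennreal) \<Rightarrow> bool" where
  "banach_function_norm \<rho> \<longleftrightarrow>
     \<comment> \<open>(A1)\<close>
     (\<forall>f \<in> borel_measurable lebesgue. \<rho> f = 0 \<longleftrightarrow> (AE x in lebesgue. f x = 0)) \<and>
     (\<forall>f \<in> borel_measurable lebesgue. \<forall>a::real. a \<ge> 0 \<longrightarrow>
        \<rho> (\<lambda>x. ennreal a * f x) = ennreal a * \<rho> f) \<and>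
     (\<forall>f \<in> borel_measurable lebesgue. \<forall>g \<in> borel_measurable lebesgue.
        \<rho> (\<lambda>x. f x + g x) \<le> \<rho> f + \<rho> g) \<and>
     \<comment> \<open>(A2)\<close>
     (\<forall>f \<in> borel_measurable lebesgue. \<forall>g \<in> borel_measurable lebesgue.
        (AE x in lebesgue. g x \<le> f x) \<longrightarrow> \<rho> g \<le> \<rho> f) \<and>
     \<comment> \<open>(A3)\<close>
     (\<forall>F f. (\<forall>j. F j \<in> borel_measurable lebesgue) \<longrightarrow> f \<in> borel_measurable lebesgue \<longrightarrow>
        (AE x in lebesgue. incseq (\<lambda>j. F j x) \<and> (\<lambda>j. F j x) \<longlonglongrightarrow> f x) \<longrightarrow>
        incseq (\<lambda>j. \<rho> (F j)) \<and> (\<lambda>j. \<rho> (F j)) \<longlonglongrightarrow> \<rho> f) \<and>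
     \<comment> \<open>(A4)\<close>
     (\<forall>E \<in> sets lebesgue. emeasure lebesgue E < \<infinity> \<longrightarrow> \<rho> (indicator E) < \<infinity>) \<and>
     \<comment> \<open>(A5)\<close>
     (\<forall>E \<in> sets lebesgue. emeasure lebesgue E < \<infinity> \<longrightarrow>
        (\<exists>C::real. \<forall>f \<in> borel_measurable lebesgue.
            (\<integral>\<^sup>+ x \<in> E. f x \<partial>lebesgue) \<le> ennreal C * \<rho> f))"

definition bfs_norm :: "(('a::euclidean_space \<Rightarrow> ennreal) \<Rightarrow> ennreal) \<Rightarrow> ('a \<Rightarrow> complex) \<Rightarrow> ennreal" where
  "bfs_norm \<rho> f = \<rho> (\<lambda>x. ennreal (cmod (f x)))"

definition bfs :: "(('a::euclidean_space \<Rightarrow> ennreal) \<Rightarrow> ennreal) \<Rightarrow> ('a \<Rightarrow> complex) set" where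
  "bfs \<rho> = {f \<in> borel_measurable lebesgue. bfs_norm \<rho> f < \<infinity>}"

definition translation_invariant :: "(('a::euclidean_space \<Rightarrow> ennreal) \<Rightarrow> ennreal) \<Rightarrow> bool" where
  "translation_invariant \<rho> \<longleftrightarrow>
     (\<forall>u \<in> bfs \<rho>. \<forall>y. bfs_norm \<rho> (\<lambda>x. u (x - y)) = bfs_norm \<rho> u)"

definition weighted_norm ::
  "(('a::euclidean_space \<Rightarrow> ennreal) \<Rightarrow> ennreal) \<Rightarrow> ('a \<Rightarrow> real) \<Rightarrow> ('a \<Rightarrow> complex) \<Rightarrow> ennreal" where
  "weighted_norm \<rho> w f = bfs_norm \<rho> (\<lambda>x. f x * complex_of_real (w x))"

definition weak_doubling :: "(('a::euclidean_space \<Rightarrow> complex) \<Rightarrow> ennreal) \<Rightarrow> bool" where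
  "weak_doubling nZ \<longleftrightarrow>
     (\<exists>\<tau>::real. \<tau> > 1 \<and>
        Liminf at_top (\<lambda>R::real. INF y. nZ (indicator (ball y (\<tau> * R))) / nZ (indicator (ball y R))) < \<infinity>)"

end

theory Submission
  imports Defs
begin

text \<open>Write \<open>\<phi>(r)\<close> for the \<open>X\<close>-norm of the indicator of a ball of radius \<open>r\<close>; by translation
invariance it does not depend on the centre, and it is positive and finite. Fix \<open>\<tau> > 1\<close> and
\<open>a = (\<tau> - 1)/4\<close>. By compactness of the unit ball and scaling, every ball of radius \<open>R\<close> is
covered by \<open>N\<close> balls of radius \<open>a R\<close> with \<open>N\<close> independent of \<open>R\<close>, so \<open>\<phi>(R) \<le> N \<phi>(a R)\<close>.
On \<open>B(y, R)\<close> the weight is at most \<open>e\<^bsup>c(|y| + R)\<^esup>\<close>, while \<open>B(y, \<tau> R)\<close> contains a ball of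
radius \<open>a R\<close> on which the weight is at least \<open>e\<^bsup>c(|y| + R + a R)\<^esup>\<close>. Hence the doubling
quotient is at least \<open>e\<^bsup>c a R\<^esup> / N\<close> uniformly in \<open>y\<close>, which tends to infinity with \<open>R\<close>.\<close>

lemma sets_lebesgue_ball [measurable]: "ball (y::'a::euclidean_space) r \<in> sets lebesgue"
  by (simp add: fmeasurable_def lmeasurable_ball)

lemma banach_function_norm_mono:
  assumes "banach_function_norm \<rho>" "f \<in> borel_measurable lebesgue" "g \<in> borel_measurable lebesgue"
    and "\<And>x. g x \<le> f x"
  shows "\<rho> g \<le> \<rho> f"
  using assms unfolding banach_function_norm_def by (meson AE_I2)

lemma banach_function_norm_cmult:
  assumes "banach_function_norm \<rho>" "f \<in> borel_measurable lebesgue" "a \<ge> 0"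
  shows "\<rho> (\<lambda>x. ennreal a * f x) = ennreal a * \<rho> f"
  using assms unfolding banach_function_norm_def by blast

lemma banach_function_norm_add:
  assumes "banach_function_norm \<rho>" "f \<in> borel_measurable lebesgue" "g \<in> borel_measurable lebesgue"
  shows "\<rho> (\<lambda>x. f x + g x) \<le> \<rho> f + \<rho> g"
  using assms unfolding banach_function_norm_def by blast

lemma banach_function_norm_sum:
  assumes "banach_function_norm \<rho>" "finite I" "\<And>i. i \<in> I \<Longrightarrow> f i \<in> borel_measurable lebesgue"
  shows "\<rho> (\<lambda>x. \<Sum>i\<in>I. f i x) \<le> (\<Sum>i\<in>I. \<rho> (f i))"
  using assms(2,3)
proof (induction I rule: finite_induct)
  case empty
  then show ?case using assms(1) unfolding banach_function_norm_def by auto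
next
  case (insert i I)
  have "\<rho> (\<lambda>x. f i x + (\<Sum>i\<in>I. f i x)) \<le> \<rho> (f i) + \<rho> (\<lambda>x. \<Sum>i\<in>I. f i x)"
    using insert by (intro banach_function_norm_add[OF assms(1)]) auto
  also have "\<dots> \<le> \<rho> (f i) + (\<Sum>i\<in>I. \<rho> (f i))"
    using insert by (intro add_left_mono) auto
  finally show ?case using insert by simp
qed

lemma banach_function_norm_indicator_ball_finite:
  assumes "banach_function_norm \<rho>"
  shows "\<rho> (indicator (ball (y::'a::euclidean_space) r)) < \<infinity>"
  using assms emeasure_lborel_ball_finite[of y r] unfolding banach_function_norm_def by auto

lemma banach_function_norm_indicator_ball_pos:
  assumes "banach_function_norm \<rho>" "r > 0"
  shows "\<rho> (indicator (ball (y::'a::euclidean_space) r)) > 0"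
proof (rule ccontr)
  assume "\<not> ?thesis"
  then have "AE x in lebesgue. (indicator (ball y r) x :: ennreal) = 0"
    using assms(1) unfolding banach_function_norm_def by (simp add: borel_measurable_indicator)
  then have "emeasure lebesgue (ball y r) = 0"
    by (subst (asm) AE_iff_measurable[of "ball y r"]) (auto simp: indicator_def)
  then show False
    using content_ball_pos[OF assms(2), of y] by (simp add: measure_def)
qed

lemma translation_invariant_indicator_ball:
  assumes "banach_function_norm \<rho>" "translation_invariant \<rho>"
  shows "\<rho> (indicator (ball (y::'a::euclidean_space) r)) = \<rho> (indicator (ball 0 r))"
proof -
  have cmod_indicator: "(\<lambda>x. ennreal (cmod (indicator A x :: complex))) = indicator A" for A :: "'a set"
    by (auto simp: fun_eq_iff indicator_def)
  let ?u = "indicator (ball 0 r) :: 'a \<Rightarrow> complex"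
  have "?u \<in> bfs \<rho>"
    using banach_function_norm_indicator_ball_finite[OF assms(1)] cmod_indicator[of "ball 0 r"]
    unfolding bfs_def bfs_norm_def by (auto intro: borel_measurable_indicator)
  then have "bfs_norm \<rho> (\<lambda>x. ?u (x - y)) = bfs_norm \<rho> ?u"
    using assms(2) unfolding translation_invariant_def by blast
  moreover have "(\<lambda>x. ennreal (cmod (?u (x - y)))) = indicator (ball y r)"
    by (auto simp: fun_eq_iff indicator_def dist_norm norm_minus_commute)
  ultimately show ?thesis
    using cmod_indicator[of "ball 0 r"] unfolding bfs_norm_def by simp
qed

lemma ball_subset_Union_scaled_balls:
  assumes "a > 0"
  obtains F :: "'a::euclidean_space set"
  where "finite F" "F \<noteq> {}" "\<And>R. R > 0 \<Longrightarrow> ball 0 R \<subseteq> (\<Union>x\<in>F. ball (R *\<^sub>R x) (a * R))"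
proof -
  obtain F where F: "finite F" "cball (0::'a) 1 \<subseteq> (\<Union>x\<in>F. ball x a)"
    using seq_compact_imp_totally_bounded[OF compact_imp_seq_compact[OF compact_cball[of "0::'a" 1]]] assms by meson
  have "ball 0 R \<subseteq> (\<Union>x\<in>F. ball (R *\<^sub>R x) (a * R))" if R: "R > 0" for R
  proof
    fix v :: 'a
    assume "v \<in> ball 0 R"
    then have "(1/R) *\<^sub>R v \<in> cball 0 1"
      using R by (simp add: field_simps)
    then have "(1/R) *\<^sub>R v \<in> (\<Union>x\<in>F. ball x a)"
      using F(2) by blast
    then obtain x where x: "x \<in> F" "dist x ((1/R) *\<^sub>R v) < a"
      by auto
    have "R *\<^sub>R x - v = R *\<^sub>R (x - (1/R) *\<^sub>R v)"
      using R by (simp add: algebra_simps)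
    then have "dist (R *\<^sub>R x) v = R * dist x ((1/R) *\<^sub>R v)"
      using R by (simp add: dist_norm)
    with x R show "v \<in> (\<Union>x\<in>F. ball (R *\<^sub>R x) (a * R))"
      by (auto simp: mult.commute intro!: bexI[of _ x])
  qed
  moreover have "F \<noteq> {}"
    using F(2) by auto
  ultimately show ?thesis
    using that F(1) by blast
qed

lemma banach_function_norm_indicator_ball_le_mult:
  assumes "banach_function_norm \<rho>" "translation_invariant \<rho>" "a > 0"
  obtains N :: real where "N > 0"
    "\<And>R. R > 0 \<Longrightarrow> \<rho> (indicator (ball (0::'a::euclidean_space) R)) \<le> ennreal N * \<rho> (indicator (ball 0 (a * R)))"
proof -
  obtain F :: "'a set" where F: "finite F" "F \<noteq> {}"
    and cover: "\<And>R. R > 0 \<Longrightarrow> ball 0 R \<subseteq> (\<Union>x\<in>F. ball (R *\<^sub>R x) (a * R))"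
    using ball_subset_Union_scaled_balls[OF assms(3)] by blast
  have "\<rho> (indicator (ball 0 R)) \<le> ennreal (card F) * \<rho> (indicator (ball (0::'a) (a * R)))"
    if "R > 0" for R
  proof -
    have "\<rho> (indicator (ball 0 R)) \<le> \<rho> (\<lambda>v. \<Sum>x\<in>F. indicator (ball (R *\<^sub>R x) (a * R)) v)"
    proof (rule banach_function_norm_mono[OF assms(1)])
      fix v :: 'a
      show "indicator (ball 0 R) v \<le> (\<Sum>x\<in>F. indicator (ball (R *\<^sub>R x) (a * R)) v :: ennreal)"
      proof (cases "v \<in> ball 0 R")
        case True
        then obtain x where "x \<in> F" "v \<in> ball (R *\<^sub>R x) (a * R)"
          using cover[OF \<open>R > 0\<close>] by blast
        then show ?thesis
          using True F(1) member_le_sum[of x F "\<lambda>x. indicator (ball (R *\<^sub>R x) (a * R)) v :: ennreal"]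
          by simp
      qed simp
    qed (use F(1) in measurable)
    also have "\<dots> \<le> (\<Sum>x\<in>F. \<rho> (indicator (ball (R *\<^sub>R x) (a * R))))"
      using F(1) by (intro banach_function_norm_sum[OF assms(1)]) measurable
    also have "\<dots> = (\<Sum>x\<in>F. \<rho> (indicator (ball 0 (a * R))))"
      by (intro sum.cong refl translation_invariant_indicator_ball[OF assms(1,2)])
    also have "\<dots> = ennreal (card F) * \<rho> (indicator (ball 0 (a * R)))"
      by (simp add: ennreal_of_nat_eq_real_of_nat)
    finally show ?thesis .
  qed
  moreover have "card F > 0"
    using F by (simp add: card_gt_0_iff)
  ultimately show ?thesis
    using that[of "card F"] by simp
qed

lemma exists_unit_radial_direction:
  fixes y :: "'a::euclidean_space"
  obtains u where "norm u = 1" "\<And>t. t \<ge> 0 \<Longrightarrow> norm (y + t *\<^sub>R u) = norm y + t"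
proof (cases "y = 0")
  case True
  obtain b :: 'a where "b \<in> Basis"
    using nonempty_Basis by blast
  then show ?thesis
    using that[of b] True by simp
next
  case False
  have "norm (y + t *\<^sub>R sgn y) = norm y + t" if "t \<ge> 0" for t
  proof -
    have "y + t *\<^sub>R sgn y = (1 + t / norm y) *\<^sub>R y"
      using False by (simp add: sgn_div_norm divide_inverse algebra_simps)
    then show ?thesis
      using that False by (simp add: abs_of_nonneg field_simps)
  qed
  then show ?thesis
    using that[of "sgn y"] False by (simp add: norm_sgn)
qed

text \<open>The small ball is centred on the ray from the origin through \<open>y\<close>, at distance
\<open>(1 + 2a) R\<close> from \<open>y\<close>.\<close>

lemma ball_contains_distant_ball:
  fixes y :: "'a::euclidean_space"
  assumes "R > 0" "a > 0" "1 + 4 * a \<le> \<tau>"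
  obtains z where "ball z (a * R) \<subseteq> ball y (\<tau> * R)"
    "\<And>x. x \<in> ball z (a * R) \<Longrightarrow> norm y + R + a * R \<le> norm x"
proof -
  obtain u where u: "norm u = 1" "\<And>t. t \<ge> 0 \<Longrightarrow> norm (y + t *\<^sub>R u) = norm y + t"
    using exists_unit_radial_direction by blast
  define z where "z = y + (R + 2 * a * R) *\<^sub>R u"
  have norm_z: "norm z = norm y + R + 2 * a * R"
    unfolding z_def using u assms by simp
  have dist_yz: "dist y z = R + 2 * a * R"
    unfolding z_def dist_norm using u assms by simp
  have "ball z (a * R) \<subseteq> ball y (\<tau> * R)"
  proof
    fix x
    assume "x \<in> ball z (a * R)"
    then have "dist y x < (1 + 3 * a) * R"
      using dist_triangle[of y x z] dist_yz by (simp add: algebra_simps)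
    also have "\<dots> \<le> \<tau> * R"
      using assms by (intro mult_right_mono) auto
    finally show "x \<in> ball y (\<tau> * R)"
      by simp
  qed
  moreover have "norm y + R + a * R \<le> norm x" if "x \<in> ball z (a * R)" for x
    using that norm_z norm_triangle_ineq2[of z x] by (simp add: dist_norm)
  ultimately show ?thesis
    using that by blast
qed

lemma weighted_norm_indicator:
  "weighted_norm \<rho> w (indicator A) = \<rho> (\<lambda>x. ennreal (indicator A x * \<bar>w x\<bar>))"
  unfolding weighted_norm_def bfs_norm_def
  by (rule arg_cong[where f=\<rho>]) (auto simp: fun_eq_iff indicator_def)

lemma weighted_norm_indicator_ge:
  assumes "banach_function_norm \<rho>" "w \<in> borel_measurable lebesgue"
    and "A \<in> sets lebesgue" "B \<in> sets lebesgue" "A \<subseteq> B"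
    and "m \<ge> 0" "\<And>x. x \<in> A \<Longrightarrow> m \<le> \<bar>w x\<bar>"
  shows "ennreal m * \<rho> (indicator A) \<le> weighted_norm \<rho> w (indicator B)"
proof -
  have "ennreal m * \<rho> (indicator A) = \<rho> (\<lambda>x. ennreal m * indicator A x)"
    using assms by (simp add: banach_function_norm_cmult borel_measurable_indicator)
  also have "\<dots> \<le> \<rho> (\<lambda>x. ennreal (indicator B x * \<bar>w x\<bar>))"
  proof (rule banach_function_norm_mono[OF assms(1)])
    show "ennreal m * indicator A x \<le> ennreal (indicator B x * \<bar>w x\<bar>)" for x
      using assms(5-7) by (auto simp: indicator_def ennreal_leI)
  qed (use assms(2-4) in measurable)
  finally show ?thesis
    by (simp add: weighted_norm_indicator)
qed

lemma weighted_norm_indicator_le: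
  assumes "banach_function_norm \<rho>" "w \<in> borel_measurable lebesgue" "A \<in> sets lebesgue"
    and "M \<ge> 0" "\<And>x. x \<in> A \<Longrightarrow> \<bar>w x\<bar> \<le> M"
  shows "weighted_norm \<rho> w (indicator A) \<le> ennreal M * \<rho> (indicator A)"
proof -
  have "ennreal M * \<rho> (indicator A) = \<rho> (\<lambda>x. ennreal M * indicator A x)"
    using assms by (simp add: banach_function_norm_cmult borel_measurable_indicator)
  moreover have "\<rho> (\<lambda>x. ennreal (indicator A x * \<bar>w x\<bar>)) \<le> \<rho> (\<lambda>x. ennreal M * indicator A x)"
  proof (rule banach_function_norm_mono[OF assms(1)])
    show "ennreal (indicator A x * \<bar>w x\<bar>) \<le> ennreal M * indicator A x" for x
      using assms(4,5) by (auto simp: indicator_def ennreal_leI)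
  qed (use assms(2,3) in measurable)
  ultimately show ?thesis
    by (simp add: weighted_norm_indicator)
qed

lemma ennreal_quotient_lower_bound:
  fixes A B :: ennreal
  assumes "ennreal (s * p) \<le> A" "0 < B" "B \<le> ennreal (t * p)" "s \<ge> 0" "t > 0" "p > 0"
  shows "ennreal (s / t) \<le> A / B"
proof -
  have "B < \<infinity>"
    using assms(3) le_less_trans by fastforce
  then obtain d where d: "B = ennreal d" "0 \<le> d"
    by (cases B) auto
  with assms(2,3,5,6) have "0 < d" "d \<le> t * p"
    by (simp_all add: ennreal_le_iff[symmetric] del: ennreal_le_iff)
  have "s / t = s * p / (t * p)"
    using assms by simp
  also have "\<dots> \<le> s * p / d"
    using d assms by (intro frac_le) auto
  finally have "ennreal (s / t) \<le> ennreal (s * p) / ennreal d"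
    using d assms by (simp add: divide_ennreal ennreal_leI)
  also have "\<dots> \<le> A / B"
    using d assms(1) by (simp add: divide_right_mono_ennreal)
  finally show ?thesis .
qed

lemma borel_measurable_exp_norm: "(\<lambda>x::'a::euclidean_space. exp (c * norm x)) \<in> borel_measurable lebesgue"
  by (simp add: measurable_completion borel_measurable_continuous_onI continuous_intros)

lemma exp_weighted_norm_ball_ge:
  fixes \<rho> :: "('a::euclidean_space \<Rightarrow> ennreal) \<Rightarrow> ennreal" and c :: real
  assumes \<rho>: "banach_function_norm \<rho>" "translation_invariant \<rho>"
    and "c \<ge> 0" "R > 0" "a > 0" "1 + 4 * a \<le> \<tau>"
  shows "ennreal (exp (c * (norm y + R + a * R))) * \<rho> (indicator (ball 0 (a * R)))
           \<le> weighted_norm \<rho> (\<lambda>x. exp (c * norm x)) (indicator (ball y (\<tau> * R)))"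
proof -
  obtain z where z: "ball z (a * R) \<subseteq> ball y (\<tau> * R)"
    "\<And>x. x \<in> ball z (a * R) \<Longrightarrow> norm y + R + a * R \<le> norm x"
    using ball_contains_distant_ball assms by blast
  have "exp (c * (norm y + R + a * R)) \<le> \<bar>exp (c * norm x)\<bar>" if "x \<in> ball z (a * R)" for x
    using z(2)[OF that] \<open>c \<ge> 0\<close> by (simp add: mult_left_mono)
  then have "ennreal (exp (c * (norm y + R + a * R))) * \<rho> (indicator (ball z (a * R)))
               \<le> weighted_norm \<rho> (\<lambda>x. exp (c * norm x)) (indicator (ball y (\<tau> * R)))"
    using z(1) by (intro weighted_norm_indicator_ge[OF \<rho>(1) borel_measurable_exp_norm]) auto
  then show ?thesis
    using translation_invariant_indicator_ball[OF \<rho>, of z "a * R"] by simp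
qed

lemma exp_weighted_norm_ball_le:
  fixes \<rho> :: "('a::euclidean_space \<Rightarrow> ennreal) \<Rightarrow> ennreal" and c :: real
  assumes \<rho>: "banach_function_norm \<rho>" "translation_invariant \<rho>" and "c \<ge> 0"
  shows "weighted_norm \<rho> (\<lambda>x. exp (c * norm x)) (indicator (ball y R))
           \<le> ennreal (exp (c * (norm y + R))) * \<rho> (indicator (ball 0 R))"
proof -
  have "\<bar>exp (c * norm x)\<bar> \<le> exp (c * (norm y + R))" if "x \<in> ball y R" for x
  proof -
    have "norm x \<le> norm y + R"
      using that norm_triangle_ineq2[of x y] by (simp add: dist_norm norm_minus_commute)
    then show ?thesis
      using \<open>c \<ge> 0\<close> by (simp add: mult_left_mono)
  qed
  then have "weighted_norm \<rho> (\<lambda>x. exp (c * norm x)) (indicator (ball y R))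
               \<le> ennreal (exp (c * (norm y + R))) * \<rho> (indicator (ball y R))"
    by (intro weighted_norm_indicator_le[OF \<rho>(1) borel_measurable_exp_norm]) auto
  then show ?thesis
    using translation_invariant_indicator_ball[OF \<rho>, of y R] by simp
qed

lemma exp_weighted_ball_quotient_ge:
  fixes \<rho> :: "('a::euclidean_space \<Rightarrow> ennreal) \<Rightarrow> ennreal" and c :: real
  defines "w \<equiv> \<lambda>x. exp (c * norm x)"
  assumes \<rho>: "banach_function_norm \<rho>" "translation_invariant \<rho>"
    and "c > 0" "a > 0" "1 + 4 * a \<le> \<tau>" "N > 0"
    and cover: "\<And>R. R > 0 \<Longrightarrow> \<rho> (indicator (ball (0::'a) R)) \<le> ennreal N * \<rho> (indicator (ball 0 (a * R)))"
    and "R > 0"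
  shows "ennreal (exp (c * a * R) / N)
           \<le> weighted_norm \<rho> w (indicator (ball y (\<tau> * R))) / weighted_norm \<rho> w (indicator (ball y R))"
proof -
  obtain p where p: "\<rho> (indicator (ball (0::'a) (a * R))) = ennreal p" "p > 0"
    using banach_function_norm_indicator_ball_pos[OF \<rho>(1), of "a * R" 0]
      banach_function_norm_indicator_ball_finite[OF \<rho>(1), of 0 "a * R"] assms
    by (cases "\<rho> (indicator (ball (0::'a) (a * R)))") (auto simp: ennreal_less_iff)
  define E where "E = exp (c * (norm y + R))"
  have "E > 0"
    by (simp add: E_def)
  have "exp (c * (norm y + R + a * R)) = exp (c * a * R) * E"
    by (simp add: E_def algebra_simps flip: exp_add)
  then have numerator_ge: "ennreal (exp (c * a * R) * E * p) \<le> weighted_norm \<rho> w (indicator (ball y (\<tau> * R)))"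
    using exp_weighted_norm_ball_ge[OF \<rho>, of c R a \<tau> y] assms p \<open>E > 0\<close> by (simp add: ennreal_mult w_def)
  have "weighted_norm \<rho> w (indicator (ball y R)) \<le> ennreal E * \<rho> (indicator (ball 0 R))"
    using exp_weighted_norm_ball_le[OF \<rho>, of c y R] assms by (simp add: E_def w_def)
  also have "\<dots> \<le> ennreal E * (ennreal N * ennreal p)"
    using cover[OF \<open>R > 0\<close>] p by (simp add: mult_left_mono)
  finally have denominator_le: "weighted_norm \<rho> w (indicator (ball y R)) \<le> ennreal (E * N * p)"
    using assms p \<open>E > 0\<close> by (simp add: ennreal_mult mult.assoc)
  have "0 < \<rho> (indicator (ball y R))"
    using banach_function_norm_indicator_ball_pos[OF \<rho>(1) \<open>R > 0\<close>] .
  also have "\<dots> \<le> weighted_norm \<rho> w (indicator (ball y R))"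
    using weighted_norm_indicator_ge[OF \<rho>(1) borel_measurable_exp_norm, of "ball y R" "ball y R" 1 c] assms
    by (simp add: w_def)
  finally have denominator_pos: "0 < weighted_norm \<rho> w (indicator (ball y R))" .
  have "exp (c * a * R) / N = exp (c * a * R) * E / (E * N)"
    by (simp add: E_def)
  then show ?thesis
    using ennreal_quotient_lower_bound[OF numerator_ge denominator_pos denominator_le] assms p \<open>E > 0\<close>
    by simp
qed

theorem theorem3p7:
  fixes \<rho> :: "('a::euclidean_space \<Rightarrow> ennreal) \<Rightarrow> ennreal" and c :: real
  assumes "banach_function_norm \<rho>"
    and "translation_invariant \<rho>"
    and "c > 0"
  shows "\<not> weak_doubling (weighted_norm \<rho> (\<lambda>x. exp (c * norm x)))"
proof
  let ?Q = "\<lambda>\<tau> R. INF y. weighted_norm \<rho> (\<lambda>x. exp (c * norm x)) (indicator (ball y (\<tau> * R)))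
                         / weighted_norm \<rho> (\<lambda>x. exp (c * norm x)) (indicator (ball y R))"
  assume "weak_doubling (weighted_norm \<rho> (\<lambda>x. exp (c * norm x)))"
  then obtain \<tau> :: real where "\<tau> > 1" and finite_liminf: "Liminf at_top (?Q \<tau>) < \<infinity>"
    unfolding weak_doubling_def by blast
  define a where "a = (\<tau> - 1) / 4"
  have a: "a > 0" "1 + 4 * a \<le> \<tau>"
    using \<open>\<tau> > 1\<close> by (auto simp: a_def field_simps)
  obtain N where N: "N > 0"
    "\<And>R. R > 0 \<Longrightarrow> \<rho> (indicator (ball (0::'a) R)) \<le> ennreal N * \<rho> (indicator (ball 0 (a * R)))"
    using banach_function_norm_indicator_ball_le_mult[OF assms(1,2) a(1)] by blast
  have "eventually (\<lambda>R. ennreal (exp (c * a * R) / N) \<le> ?Q \<tau> R) at_top"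
    using eventually_gt_at_top[of 0]
    by eventually_elim (intro INF_greatest exp_weighted_ball_quotient_ge assms a N)
  then have "Liminf at_top (\<lambda>R. ennreal (exp (c * a * R) / N)) \<le> Liminf at_top (?Q \<tau>)"
    by (rule Liminf_mono)
  moreover have "filterlim (\<lambda>R. exp (c * a * R) / N) at_top at_top"
    using assms(3) a N
    by (auto simp: divide_inverse mult.commute[of _ "inverse N"]
        intro!: filterlim_tendsto_pos_mult_at_top exp_at_top[THEN filterlim_compose] filterlim_ident)
  then have "Liminf at_top (\<lambda>R. ennreal (exp (c * a * R) / N)) = \<infinity>"
    by (intro lim_imp_Liminf) (simp_all add: ennreal_tendsto_top_eq_at_top)
  ultimately show False
    using finite_liminf by simp
qed

end
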